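(* Let $\phi\in\mathrm{Aut}_0(H)$. Then $\phi(H(m))\not\subseteq\sum_{i=0}^{m-1}H(i)$ for all $m\geq1$.
   Context: Let $k$ be a field and $0\neq q\in k$ not a root of unity. $H=k_q[x,x^{-1},y]$ is the $k$-algebra generated by $x,x^{-1},y$ with $xx^{-1}=x^{-1}x=1$, $yx=qxy$, a Hopf algebra with $\Delta(x)=x\otimes x$, $\Delta(x^{-1})=x^{-1}\otimes x^{-1}$, $\Delta(y)=y\otimes x+1\otimes y$, $\varepsilon(x)=1$, $\varepsilon(y)=0$; $\{x^ny^m:n\in\mathbb{Z},m\in\mathbb{N}\}$ is a $k$-basis. $H_0=\mathrm{span}\{x^n:n\in\mathbb{Z}\}$ and $H(m)=H_0y^m$. $\mathrm{Aut}_0(H)$ is the group of coalgebra automorphisms $\phi$ of $H$ with $\phi(1)=1$. *)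

theory Defs
  imports Main
begin

text \<open>Elements of H = k_q[x,x^-1,y] are finitely supported coefficient functions on the
basis x^n y^m, indexed by (n,m) :: int * nat.  Elements of H (x) H are finitely supported
functions on pairs of basis indices (basis x^a y^b (x) x^c y^d).\<close>

type_synonym 'k hq = "int \<times> nat \<Rightarrow> 'k"
type_synonym 'k hq2 = "(int \<times> nat) \<times> (int \<times> nat) \<Rightarrow> 'k"

definition fsupp :: "('a \<Rightarrow> 'k::zero) \<Rightarrow> 'a set" where
  "fsupp f = {b. f b \<noteq> 0}"

definition fin_supp :: "('a \<Rightarrow> 'k::zero) set" where
  "fin_supp = {f. finite (fsupp f)}"

definition Hq :: "'k::zero hq set" where
  "Hq = fin_supp"

definition hmono :: "int \<times> nat \<Rightarrow> 'k::{zero,one} hq" where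
  "hmono b = (\<lambda>c. if c = b then 1 else 0)"

definition tmono :: "int \<times> nat \<Rightarrow> int \<times> nat \<Rightarrow> 'k::{zero,one} hq2" where
  "tmono b1 b2 = (\<lambda>p. if p = (b1, b2) then 1 else 0)"

text \<open>(x^a y^b)(x^c y^d) = q^(b c) x^(a+c) y^(b+d), since y x = q x y.\<close>
definition mono_add :: "int \<times> nat \<Rightarrow> int \<times> nat \<Rightarrow> int \<times> nat" where
  "mono_add b c = (fst b + fst c, snd b + snd c)"

definition mono_coef :: "'k::field \<Rightarrow> int \<times> nat \<Rightarrow> int \<times> nat \<Rightarrow> 'k" where
  "mono_coef q b c = q powi (int (snd b) * fst c)"

definition tmul :: "'k::field \<Rightarrow> 'k hq2 \<Rightarrow> 'k hq2 \<Rightarrow> 'k hq2" where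
  "tmul q S T = (\<lambda>c. \<Sum>p\<in>fsupp S. \<Sum>p'\<in>fsupp T.
      if (mono_add (fst p) (fst p'), mono_add (snd p) (snd p')) = c
      then mono_coef q (fst p) (fst p') * mono_coef q (snd p) (snd p') * S p * T p'
      else 0)"

primrec tpow :: "'k::field \<Rightarrow> 'k hq2 \<Rightarrow> nat \<Rightarrow> 'k hq2" where
  "tpow q T 0 = tmono (0,0) (0,0)"
| "tpow q T (Suc n) = tmul q (tpow q T n) T"

definition Delta_y :: "'k::field hq2" where
  "Delta_y = (\<lambda>p. tmono (0,1) (1,0) p + tmono (0,0) (0,1) p)"

text \<open>Delta(x^n y^m) = Delta(x)^n Delta(y)^m = (x^n (x) x^n) (y (x) x + 1 (x) y)^m.\<close>
definition Delta_mono :: "'k::field \<Rightarrow> int \<times> nat \<Rightarrow> 'k hq2" where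
  "Delta_mono q b = tmul q (tmono (fst b, 0) (fst b, 0)) (tpow q Delta_y (snd b))"

definition Delta :: "'k::field \<Rightarrow> 'k hq \<Rightarrow> 'k hq2" where
  "Delta q f = (\<lambda>p. \<Sum>b\<in>fsupp f. f b * Delta_mono q b p)"

definition counit :: "'k::field hq \<Rightarrow> 'k" where
  "counit f = (\<Sum>b\<in>fsupp f. if snd b = 0 then f b else 0)"

definition tensor_map :: "('k::field hq \<Rightarrow> 'k hq) \<Rightarrow> 'k hq2 \<Rightarrow> 'k hq2" where
  "tensor_map \<phi> T = (\<lambda>p. \<Sum>p'\<in>fsupp T.
      T p' * \<phi> (hmono (fst p')) (fst p) * \<phi> (hmono (snd p')) (snd p))"

definition Aut0 :: "'k::field \<Rightarrow> ('k hq \<Rightarrow> 'k hq) set" where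
  "Aut0 q = {\<phi>.
      (\<forall>f\<in>Hq. \<forall>g\<in>Hq. \<phi> (\<lambda>b. f b + g b) = (\<lambda>b. \<phi> f b + \<phi> g b)) \<and>
      (\<forall>c. \<forall>f\<in>Hq. \<phi> (\<lambda>b. c * f b) = (\<lambda>b. c * \<phi> f b)) \<and>
      bij_betw \<phi> Hq Hq \<and>
      (\<forall>f\<in>Hq. Delta q (\<phi> f) = tensor_map \<phi> (Delta q f)) \<and>
      (\<forall>f\<in>Hq. counit (\<phi> f) = counit f) \<and>
      \<phi> (hmono (0,0)) = hmono (0,0)}"

definition Hdeg :: "nat \<Rightarrow> 'k::zero hq set" where
  "Hdeg m = {f\<in>Hq. fsupp f \<subseteq> {b. snd b = m}}"

definition Hbelow :: "nat \<Rightarrow> 'k::zero hq set" where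
  "Hbelow m = {f\<in>Hq. fsupp f \<subseteq> {b. snd b < m}}"

end

theory Submission
  imports Defs
begin

text \<open>Every linear coalgebra endomorphism f of H preserves the filtration
H(0) + \<dots> + H(n-1), n \<ge> 1. For n = 1 this is because the only group-likes of H are the x^a,
so f maps H_0 into H_0. For the inductive step, if f h had a term c x^a y^(k+1) with k \<ge> n,
then \<Delta>(f h) would contain x^a y^k \<otimes> x^(a+k) y with coefficient [k+1]_q c, where
[k+1]_q = 1 + q + \<dots> + q^k is nonzero because q is not a root of unity; but
(f \<otimes> f)(\<Delta> h) has no such term, since every term of \<Delta> h of total y-degree \<le> n
has either left y-degree < n or right y-degree 0. Applied to \<phi>\<inverse>, which is again a
coalgebra map: if \<phi>(y^m) lay in H(0) + \<dots> + H(m-1), so would y^m = \<phi>\<inverse>(\<phi>(y^m)).\<close>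

lemma sum_eq_single:
  assumes "finite A" "\<And>x. x \<in> A \<Longrightarrow> x \<noteq> a \<Longrightarrow> f x = 0" "a \<notin> A \<Longrightarrow> f a = 0"
  shows "sum f A = f a"
proof (cases "a \<in> A")
  case True
  then have "sum f A = f a + sum f (A - {a})" using assms(1) by (simp add: sum.remove)
  also have "sum f (A - {a}) = 0" using assms(2) by (intro sum.neutral) auto
  finally show ?thesis by simp
next
  case False
  then show ?thesis using assms by (auto intro!: sum.neutral)
qed

lemma sum_eq_two:
  assumes "finite A" "\<And>x. x \<in> A \<Longrightarrow> x \<noteq> a \<Longrightarrow> x \<noteq> b \<Longrightarrow> f x = 0"
    "a \<notin> A \<Longrightarrow> f a = 0" "b \<notin> A \<Longrightarrow> f b = 0" "a \<noteq> b"
  shows "sum f A = f a + f b"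
proof -
  have "sum f A = sum f (A \<union> {a, b})"
    using assms by (intro sum.mono_neutral_left) auto
  also have "\<dots> = sum f {a, b}"
    by (rule sum.mono_neutral_right) (use assms in auto)
  finally show ?thesis using assms(5) by simp
qed

lemma power_int_of_nat_diff: "i \<le> m \<Longrightarrow> (q::'k::field) powi (int m - int i) = q ^ (m - i)"
  by (metis of_nat_diff power_int_of_nat)

lemma fsupp_hmono: "fsupp (hmono b :: 'k::field hq) = {b}"
  by (auto simp: fsupp_def hmono_def)

lemma fsupp_tmono: "fsupp (tmono a b :: 'k::field hq2) = {(a, b)}"
  by (auto simp: fsupp_def tmono_def)

lemma Hq_finite_fsupp: "g \<in> Hq \<Longrightarrow> finite (fsupp g)"
  by (simp add: Hq_def fin_supp_def)

lemma hmono_in_Hq: "hmono b \<in> (Hq :: 'k::field hq set)"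
  by (simp add: Hq_def fin_supp_def fsupp_hmono)

lemma Hq_add: "f \<in> Hq \<Longrightarrow> g \<in> Hq \<Longrightarrow> (\<lambda>b. f b + g b) \<in> (Hq :: 'k::field hq set)"
proof -
  assume "f \<in> Hq" "g \<in> Hq"
  then have "finite (fsupp f \<union> fsupp g)" by (simp add: Hq_finite_fsupp)
  moreover have "fsupp (\<lambda>b. f b + g b) \<subseteq> fsupp f \<union> fsupp g" by (auto simp: fsupp_def)
  ultimately show ?thesis by (simp add: Hq_def fin_supp_def finite_subset)
qed

lemma Hq_smult: "f \<in> Hq \<Longrightarrow> (\<lambda>b. c * f b) \<in> (Hq :: 'k::field hq set)"
proof -
  assume "f \<in> Hq"
  then have "finite (fsupp f)" by (simp add: Hq_finite_fsupp)
  moreover have "fsupp (\<lambda>b. c * f b) \<subseteq> fsupp f" by (auto simp: fsupp_def)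
  ultimately show ?thesis by (simp add: Hq_def fin_supp_def finite_subset)
qed

lemma Hbelow_coeff_zero: "g \<in> Hbelow n \<Longrightarrow> n \<le> snd c \<Longrightarrow> g c = 0"
  by (force simp: Hbelow_def fsupp_def)

lemma hmono_in_Hbelow: "snd b < n \<Longrightarrow> hmono b \<in> (Hbelow n :: 'k::field hq set)"
  by (simp add: Hbelow_def hmono_in_Hq fsupp_hmono)

subsection \<open>The powers of \<Delta>(y)\<close>

text \<open>The basis tensor y^i \<otimes> x^i y^j; the power \<Delta>(y)^m = (y \<otimes> x + 1 \<otimes> y)^m is supported
on the tensors with i + j = m, with q-binomial coefficients.\<close>

definition dy_index :: "nat \<Rightarrow> nat \<Rightarrow> (int \<times> nat) \<times> (int \<times> nat)" where
  "dy_index i j = ((0, i), (int i, j))"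

lemma dy_index_eq_iff [simp]: "dy_index i j = dy_index i' j' \<longleftrightarrow> i = i' \<and> j = j'"
  by (auto simp: dy_index_def)

lemma fsupp_Delta_y: "fsupp (Delta_y :: 'k::field hq2) = {((0,1),(1,0)), ((0,0),(0,1))}"
  by (auto simp: fsupp_def Delta_y_def tmono_def)

lemma tmul_Delta_y:
  "tmul q S (Delta_y :: 'k::field hq2) c = (\<Sum>p\<in>fsupp S.
     (if (mono_add (fst p) (0,1), mono_add (snd p) (1,0)) = c
      then mono_coef q (fst p) (0,1) * mono_coef q (snd p) (1,0) * S p else 0) +
     (if (mono_add (fst p) (0,0), mono_add (snd p) (0,1)) = c
      then mono_coef q (fst p) (0,0) * mono_coef q (snd p) (0,1) * S p else 0))"
  unfolding tmul_def fsupp_Delta_y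
  by (intro sum.cong refl) (simp add: Delta_y_def tmono_def)

lemma Delta_y_pow_nonzero_imp:
  "tpow q Delta_y m c \<noteq> (0::'k::field) \<Longrightarrow> \<exists>i\<le>m. c = dy_index i (m - i)"
proof (induction m arbitrary: c)
  case 0
  then show ?case by (auto simp: tmono_def dy_index_def split: if_splits)
next
  case (Suc m)
  from Suc.prems have "tmul q (tpow q Delta_y m) Delta_y c \<noteq> 0" by simp
  then obtain p where p: "p \<in> fsupp (tpow q Delta_y m)" and
    nz: "(if (mono_add (fst p) (0,1), mono_add (snd p) (1,0)) = c
      then mono_coef q (fst p) (0,1) * mono_coef q (snd p) (1,0) * tpow q Delta_y m p else 0) +
     (if (mono_add (fst p) (0,0), mono_add (snd p) (0,1)) = c
      then mono_coef q (fst p) (0,0) * mono_coef q (snd p) (0,1) * tpow q Delta_y m p else 0) \<noteq> 0"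
    unfolding tmul_Delta_y by (meson sum.not_neutral_contains_not_neutral)
  have "tpow q Delta_y m p \<noteq> 0" using p by (simp add: fsupp_def)
  from Suc.IH[OF this] obtain i where i: "i \<le> m" "p = dy_index i (m - i)" by blast
  show ?case
  proof (cases "(mono_add (fst p) (0,1), mono_add (snd p) (1,0)) = c")
    case True
    then have "c = dy_index (Suc i) (Suc m - Suc i)" using i by (auto simp: dy_index_def mono_add_def)
    then show ?thesis using i by (intro exI[of _ "Suc i"]) auto
  next
    case False
    with nz have "(mono_add (fst p) (0,0), mono_add (snd p) (0,1)) = c" by (auto split: if_splits)
    then have "c = dy_index i (Suc m - i)" using i by (simp add: dy_index_def mono_add_def Suc_diff_le)
    then show ?thesis using i by (intro exI[of _ i]) auto
  qed
qed

lemma fsupp_Delta_y_pow: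
  "fsupp (tpow q Delta_y m :: 'k::field hq2) \<subseteq> (\<lambda>i. dy_index i (m - i)) ` {..m}"
  using Delta_y_pow_nonzero_imp by (fastforce simp: fsupp_def)

lemma Delta_y_pow_Suc_coeff:
  "tpow q Delta_y (Suc m) c = (\<Sum>i\<le>m.
     (if dy_index (Suc i) (m-i) = c then q^(m-i) * tpow q Delta_y m (dy_index i (m-i)) else 0) +
     (if dy_index i (Suc (m-i)) = c then tpow q Delta_y m (dy_index i (m-i)) else (0::'k::field)))"
proof -
  let ?S = "tpow q Delta_y m :: 'k hq2"
  let ?F = "\<lambda>p. (if (mono_add (fst p) (0,1), mono_add (snd p) (1,0)) = c
      then mono_coef q (fst p) (0,1) * mono_coef q (snd p) (1,0) * ?S p else 0) +
     (if (mono_add (fst p) (0,0), mono_add (snd p) (0,1)) = c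
      then mono_coef q (fst p) (0,0) * mono_coef q (snd p) (0,1) * ?S p else 0)"
  have "tpow q Delta_y (Suc m) c = sum ?F (fsupp ?S)" by (simp add: tmul_Delta_y)
  also have "\<dots> = sum ?F ((\<lambda>i. dy_index i (m - i)) ` {..m})"
    by (rule sum.mono_neutral_left) (use fsupp_Delta_y_pow in \<open>auto simp: fsupp_def\<close>)
  also have "\<dots> = sum (?F \<circ> (\<lambda>i. dy_index i (m - i))) {..m}"
    by (intro sum.reindex) (auto simp: inj_on_def)
  also have "\<dots> = (\<Sum>i\<le>m.
     (if dy_index (Suc i) (m-i) = c then q^(m-i) * ?S (dy_index i (m-i)) else 0) +
     (if dy_index i (Suc (m-i)) = c then ?S (dy_index i (m-i)) else 0))"
    by (intro sum.cong refl)
      (auto simp: mono_add_def mono_coef_def dy_index_def Suc_diff_le add.commute power_int_of_nat_diff)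
  finally show ?thesis .
qed

lemma Delta_y_pow_coeff_top: "tpow q Delta_y m (dy_index m 0) = (1::'k::field)"
proof (induction m)
  case 0
  then show ?case by (simp add: tmono_def dy_index_def)
next
  case (Suc m)
  show ?case unfolding Delta_y_pow_Suc_coeff
    by (subst sum_eq_single[where a=m]) (use Suc in auto)
qed

lemma Delta_y_pow_coeff_bottom: "tpow q Delta_y m (dy_index 0 m) = (1::'k::field)"
proof (induction m)
  case 0
  then show ?case by (simp add: tmono_def dy_index_def)
next
  case (Suc m)
  show ?case unfolding Delta_y_pow_Suc_coeff
    by (subst sum_eq_single[where a=0]) (use Suc in auto)
qed

text \<open>The coefficient of y^k \<otimes> x^k y in \<Delta>(y)^(k+1) is the q-integer [k+1]_q.\<close>

lemma Delta_y_pow_coeff_mid_Suc: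
  "tpow q Delta_y (Suc (Suc k)) (dy_index (Suc k) 1) =
     q * tpow q Delta_y (Suc k) (dy_index k 1) + (1::'k::field)"
  unfolding Delta_y_pow_Suc_coeff[of q "Suc k" "dy_index (Suc k) 1"]
  by (subst sum_eq_two[where a=k and b="Suc k"])
    (auto simp: Delta_y_pow_coeff_top simp del: tpow.simps)

lemma Delta_y_pow_coeff_mid:
  "tpow q Delta_y (Suc k) (dy_index k 1) * (q - 1) = q ^ Suc k - (1::'k::field)"
proof (induction k)
  case 0
  then show ?case using Delta_y_pow_coeff_bottom[of q 1] by simp
next
  case (Suc k)
  then show ?case unfolding Delta_y_pow_coeff_mid_Suc by (simp add: algebra_simps)
qed

lemma Delta_y_pow_coeff_mid_nonzero:
  assumes "\<forall>n::nat. n > 0 \<longrightarrow> (q::'k::field) ^ n \<noteq> 1"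
  shows "tpow q Delta_y (Suc k) (dy_index k 1) \<noteq> 0"
  using Delta_y_pow_coeff_mid[of q k] assms by (metis mult_zero_left right_minus_eq zero_less_Suc)

lemma Delta_mono_coeff:
  "Delta_mono q (a, m) c = (\<Sum>i\<le>m. if ((a, i), (a + int i, m - i)) = c
      then tpow q Delta_y m (dy_index i (m - i)) else (0::'k::field))"
proof -
  let ?S = "tpow q Delta_y m :: 'k hq2"
  let ?F = "\<lambda>p. if (mono_add (a,0) (fst p), mono_add (a,0) (snd p)) = c
      then mono_coef q (a,0) (fst p) * mono_coef q (a,0) (snd p) * ?S p else 0"
  have "Delta_mono q (a, m) c = sum ?F (fsupp ?S)"
    unfolding Delta_mono_def tmul_def fsupp_tmono by simp (intro sum.cong refl; simp add: tmono_def)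
  also have "\<dots> = sum ?F ((\<lambda>i. dy_index i (m - i)) ` {..m})"
    by (rule sum.mono_neutral_left) (use fsupp_Delta_y_pow[of q m] in \<open>auto simp: fsupp_def\<close>)
  also have "\<dots> = sum (?F \<circ> (\<lambda>i. dy_index i (m - i))) {..m}"
    by (intro sum.reindex) (auto simp: inj_on_def)
  also have "\<dots> = (\<Sum>i\<le>m. if ((a, i), (a + int i, m - i)) = c then ?S (dy_index i (m - i)) else 0)"
    by (intro sum.cong refl) (auto simp: mono_add_def mono_coef_def dy_index_def)
  finally show ?thesis .
qed

lemma Delta_mono_nonzero_imp:
  "Delta_mono q b c \<noteq> (0::'k::field) \<Longrightarrow> \<exists>i\<le>snd b. c = ((fst b, i), (fst b + int i, snd b - i))"
  by (cases b, simp only: Delta_mono_coeff, drule sum.not_neutral_contains_not_neutral)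
    (auto split: if_splits)

lemma Delta_mono_coeff_bottom: "Delta_mono q (a, m) ((a, 0), (a, m)) = (1::'k::field)"
  unfolding Delta_mono_coeff by (subst sum_eq_single[where a=0]) (auto simp: Delta_y_pow_coeff_bottom)

lemma Delta_mono_coeff_mid:
  "Delta_mono q (a, Suc k) ((a, k), (a + int k, 1)) = (tpow q Delta_y (Suc k) (dy_index k 1) :: 'k::field)"
  unfolding Delta_mono_coeff by (subst sum_eq_single[where a=k]) (auto simp del: tpow.simps)

lemma Delta_nonzero_imp:
  assumes "Delta q u c \<noteq> (0::'k::field)"
  shows "\<exists>b\<in>fsupp u. \<exists>i\<le>snd b. c = ((fst b, i), (fst b + int i, snd b - i))"
proof -
  from assms obtain b where b: "b \<in> fsupp u" "u b * Delta_mono q b c \<noteq> 0"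
    unfolding Delta_def by (meson sum.not_neutral_contains_not_neutral)
  then have "Delta_mono q b c \<noteq> (0::'k)" by auto
  with b(1) show ?thesis using Delta_mono_nonzero_imp by blast
qed

lemma finite_fsupp_Delta:
  assumes "finite (fsupp u)"
  shows "finite (fsupp (Delta q u :: 'k::field hq2))"
proof (rule finite_subset)
  show "fsupp (Delta q u) \<subseteq> (\<Union>b\<in>fsupp u. (\<lambda>i. ((fst b, i), (fst b + int i, snd b - i))) ` {..snd b})"
    using Delta_nonzero_imp unfolding fsupp_def by fastforce
qed (use assms in auto)

lemma Delta_coeff_single_source:
  assumes "finite (fsupp u)" and "\<And>b. Delta_mono q b c \<noteq> 0 \<Longrightarrow> b = b0"
  shows "Delta q u c = u b0 * (Delta_mono q b0 c :: 'k::field)"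
  unfolding Delta_def
  by (rule sum_eq_single) (use assms in \<open>auto simp: fsupp_def\<close>)

lemma Delta_coeff_left_zero:
  assumes "e \<ge> 1"
  shows "Delta q u ((a, e), (a, 0)) = (0::'k::field)"
  unfolding Delta_def
proof (rule sum.neutral, rule ballI)
  fix b
  have "Delta_mono q b ((a, e), (a, 0)) = (0::'k)"
  proof (rule ccontr)
    assume "Delta_mono q b ((a, e), (a, 0)) \<noteq> 0"
    then obtain i where "((a, e), (a, 0)) = ((fst b, i), (fst b + int i, snd b - i))"
      using Delta_mono_nonzero_imp by blast
    with assms show False by simp
  qed
  then show "u b * Delta_mono q b ((a, e), (a, 0)) = 0" by simp
qed

lemma Delta_coeff_bottom:
  assumes "finite (fsupp u)"
  shows "Delta q u ((a, 0), (a, e)) = (u (a, e) :: 'k::field)"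
proof -
  have "Delta q u ((a, 0), (a, e)) = u (a, e) * Delta_mono q (a, e) ((a, 0), (a, e))"
    by (rule Delta_coeff_single_source) (use assms in \<open>auto dest: Delta_mono_nonzero_imp\<close>)
  then show ?thesis by (simp add: Delta_mono_coeff_bottom)
qed

lemma Delta_coeff_mid:
  assumes "finite (fsupp u)"
  shows "Delta q u ((a, k), (a + int k, 1)) =
    (u (a, Suc k) * tpow q Delta_y (Suc k) (dy_index k 1) :: 'k::field)"
proof -
  have "Delta q u ((a, k), (a + int k, 1)) = u (a, Suc k) * Delta_mono q (a, Suc k) ((a, k), (a + int k, 1))"
  proof (rule Delta_coeff_single_source[OF assms])
    fix b assume "Delta_mono q b ((a, k), (a + int k, 1)) \<noteq> (0::'k)"
    then show "b = (a, Suc k)" by (cases b) (auto dest: Delta_mono_nonzero_imp)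
  qed
  then show ?thesis by (simp only: Delta_mono_coeff_mid)
qed

lemma Delta_hmono_grouplike:
  "Delta q (hmono (a, 0)) p = (if p = ((a, 0), (a, 0)) then 1 else (0::'k::field))"
proof -
  have "Delta q (hmono (a, 0)) p = Delta_mono q (a, 0) p"
    unfolding Delta_def fsupp_hmono by (simp add: hmono_def)
  then show ?thesis by (simp add: Delta_mono_coeff tmono_def dy_index_def)
qed

subsection \<open>Linear coalgebra maps preserve the filtration\<close>

lemma grouplike_imp_degree_zero:
  assumes u: "u \<in> Hq" and grouplike: "\<And>p. Delta q u p = u (fst p) * (u (snd p) :: 'k::field)"
  shows "\<forall>b\<in>fsupp u. snd b = 0"
proof (rule ccontr)
  assume "\<not> (\<forall>b\<in>fsupp u. snd b = 0)"
  then obtain a e where ae: "(a, e) \<in> fsupp u" "e \<ge> 1" by fastforce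
  have "0 = u (a, e) * u (a, 0)"
    using Delta_coeff_left_zero[OF ae(2), of q u a] grouplike[of "((a, e), (a, 0))"] by simp
  moreover have "u (a, e) = u (a, 0) * u (a, e)"
    using Delta_coeff_bottom[OF Hq_finite_fsupp[OF u], of q a e] grouplike[of "((a, 0), (a, e))"] by simp
  ultimately have "u (a, e) = 0" by (metis mult.commute mult_zero_left)
  with ae show False by (simp add: fsupp_def)
qed

definition hq_linear :: "('k::field hq \<Rightarrow> 'k hq) \<Rightarrow> bool" where
  "hq_linear f \<longleftrightarrow> (\<forall>g\<in>Hq. f g = (\<lambda>c. \<Sum>b\<in>fsupp g. g b * f (hmono b) c))"

lemma hq_linearI:
  fixes F :: "'k::field hq \<Rightarrow> 'k hq"
  assumes add: "\<forall>f\<in>Hq. \<forall>g\<in>Hq. F (\<lambda>b. f b + g b) = (\<lambda>b. F f b + F g b)"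
    and smult: "\<forall>c. \<forall>f\<in>Hq. F (\<lambda>b. c * f b) = (\<lambda>b. c * F f b)"
  shows "hq_linear F"
  unfolding hq_linear_def
proof
  fix g :: "'k hq" assume "g \<in> Hq"
  define restr where "restr A = (\<lambda>y. if y \<in> A then g y else 0)" for A
  have restr_Hq: "restr A \<in> Hq" if "finite A" for A
  proof -
    have "fsupp (restr A) \<subseteq> A" by (auto simp: restr_def fsupp_def)
    then show ?thesis using that by (auto simp: Hq_def fin_supp_def intro: finite_subset)
  qed
  have F_restr: "F (restr A) = (\<lambda>c. \<Sum>b\<in>A. g b * F (hmono b) c)" if "finite A" for A
    using that
  proof (induction A rule: finite_induct)
    case empty
    have "(\<lambda>y. 0::'k) \<in> Hq" by (simp add: Hq_def fin_supp_def fsupp_def)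
    from smult[rule_format, OF this, of 0] show ?case by (simp add: restr_def)
  next
    case (insert x A)
    have split: "restr (insert x A) = (\<lambda>y. restr A y + g x * hmono x y)"
      using insert(2) by (auto simp: restr_def hmono_def)
    have "F (restr (insert x A)) = (\<lambda>b. F (restr A) b + F (\<lambda>y. g x * hmono x y) b)"
      unfolding split by (rule add[rule_format, OF restr_Hq[OF insert(1)] Hq_smult[OF hmono_in_Hq]])
    also have "F (\<lambda>y. g x * hmono x y) = (\<lambda>b. g x * F (hmono x) b)"
      by (rule smult[rule_format, OF hmono_in_Hq])
    finally show ?case using insert by (simp add: add.commute)
  qed
  have "restr (fsupp g) = g" by (auto simp: restr_def fsupp_def)
  then show "F g = (\<lambda>c. \<Sum>b\<in>fsupp g. g b * F (hmono b) c)"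
    using F_restr[OF Hq_finite_fsupp[OF \<open>g \<in> Hq\<close>]] by simp
qed

locale hq_coalgebra_map =
  fixes q :: "'k::field" and f :: "'k hq \<Rightarrow> 'k hq"
  assumes closed: "\<And>g. g \<in> Hq \<Longrightarrow> f g \<in> Hq"
    and linear: "hq_linear f"
    and coalgebra: "\<And>g. g \<in> Hq \<Longrightarrow> Delta q (f g) = tensor_map f (Delta q g)"
begin

lemma expand: "g \<in> Hq \<Longrightarrow> f g c = (\<Sum>b\<in>fsupp g. g b * f (hmono b) c)"
  using linear unfolding hq_linear_def by metis

lemma grouplike_degree_zero: "\<forall>b\<in>fsupp (f (hmono (a, 0))). snd b = 0"
proof (rule grouplike_imp_degree_zero[of _ q])
  show "f (hmono (a, 0)) \<in> Hq" by (rule closed[OF hmono_in_Hq])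
  have "fsupp (Delta q (hmono (a, 0)) :: 'k hq2) = {((a, 0), (a, 0))}"
    by (auto simp: fsupp_def Delta_hmono_grouplike)
  then show "Delta q (f (hmono (a, 0))) p = f (hmono (a, 0)) (fst p) * f (hmono (a, 0)) (snd p)" for p
    unfolding coalgebra[OF hmono_in_Hq] tensor_map_def by (simp add: Delta_hmono_grouplike)
qed

lemma maps_Hbelow_1: "h \<in> Hbelow 1 \<Longrightarrow> f h \<in> Hbelow 1"
proof -
  assume h: "h \<in> Hbelow 1"
  then have hq: "h \<in> Hq" by (simp add: Hbelow_def)
  have "f h c = 0" if c: "snd c \<noteq> 0" for c
    unfolding expand[OF hq]
  proof (rule sum.neutral, rule ballI)
    fix b assume "b \<in> fsupp h"
    then obtain a where "b = (a, 0)" using h by (cases b) (auto simp: Hbelow_def)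
    then have "f (hmono b) c = 0" using grouplike_degree_zero[of a] c by (cases c) (auto simp: fsupp_def)
    then show "h b * f (hmono b) c = 0" by simp
  qed
  then show ?thesis using closed[OF hq] by (auto simp: Hbelow_def fsupp_def)
qed

lemma maps_Hbelow_Suc:
  assumes q: "\<forall>n::nat. n > 0 \<longrightarrow> q ^ n \<noteq> 1"
    and IH: "\<And>h. h \<in> Hbelow n \<Longrightarrow> f h \<in> Hbelow n"
    and h: "h \<in> Hbelow (Suc n)"
  shows "f h \<in> Hbelow (Suc n)"
proof (rule ccontr)
  assume "f h \<notin> Hbelow (Suc n)"
  have hq: "h \<in> Hq" using h by (simp add: Hbelow_def)
  with \<open>f h \<notin> Hbelow (Suc n)\<close> have "\<not> fsupp (f h) \<subseteq> {b. snd b < Suc n}"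
    using closed by (simp add: Hbelow_def)
  then obtain b where b: "b \<in> fsupp (f h)" "\<not> snd b < Suc n" by blast
  then have "(fst b, Suc (snd b - 1)) \<in> fsupp (f h)" "snd b - 1 \<ge> n" by auto
  then obtain a k where ak: "(a, Suc k) \<in> fsupp (f h)" "k \<ge> n" by blast
  let ?c = "((a, k), (a + int k, 1))"
  have "Delta q (f h) ?c = f h (a, Suc k) * tpow q Delta_y (Suc k) (dy_index k 1)"
    by (rule Delta_coeff_mid[OF Hq_finite_fsupp[OF closed[OF hq]]])
  also have "\<dots> \<noteq> 0"
    using ak(1) Delta_y_pow_coeff_mid_nonzero[OF q] by (simp add: fsupp_def)
  finally have "Delta q (f h) ?c \<noteq> 0" .
  moreover have "tensor_map f (Delta q h) ?c = 0"
    unfolding tensor_map_def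
  proof (rule sum.neutral, rule ballI)
    fix p assume "p \<in> fsupp (Delta q h)"
    then have "Delta q h p \<noteq> 0" by (simp add: fsupp_def)
    then obtain b i where b: "b \<in> fsupp h" "i \<le> snd b"
      and p: "p = ((fst b, i), (fst b + int i, snd b - i))"
      using Delta_nonzero_imp by blast
    have "snd b \<le> n" using b(1) h by (auto simp: Hbelow_def)
    moreover have "snd (fst p) = i" "snd (snd p) = snd b - i" using p by simp_all
    ultimately consider "snd (snd p) = 0" | "snd (fst p) < n" by linarith
    then show "Delta q h p * f (hmono (fst p)) (fst ?c) * f (hmono (snd p)) (snd ?c) = 0"
    proof cases
      case 1
      then have "f (hmono (snd p)) \<in> Hbelow 1" by (intro maps_Hbelow_1 hmono_in_Hbelow) simp
      then show ?thesis by (simp add: Hbelow_coeff_zero)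
    next
      case 2
      then have "f (hmono (fst p)) \<in> Hbelow n" by (intro IH hmono_in_Hbelow)
      then show ?thesis using ak(2) by (simp add: Hbelow_coeff_zero)
    qed
  qed
  ultimately show False using coalgebra[OF hq] by simp
qed

lemma maps_Hbelow:
  assumes "\<forall>n::nat. n > 0 \<longrightarrow> q ^ n \<noteq> 1" and "n \<ge> 1" and "h \<in> Hbelow n"
  shows "f h \<in> Hbelow n"
  using assms(2,3)
proof (induction n arbitrary: h rule: dec_induct)
  case base
  then show ?case by (rule maps_Hbelow_1)
next
  case (step n)
  then show ?case using maps_Hbelow_Suc[OF assms(1)] by blast
qed

end

subsection \<open>The inverse of an automorphism\<close>

lemma fsupp_tensor_map:
  "fsupp (tensor_map F T) \<subseteq> (\<Union>p\<in>fsupp T. fsupp (F (hmono (fst p))) \<times> fsupp (F (hmono (snd p))))"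
proof
  fix p' assume "p' \<in> fsupp (tensor_map F T)"
  then have "tensor_map F T p' \<noteq> 0" by (simp add: fsupp_def)
  then obtain p where "p \<in> fsupp T" "T p * F (hmono (fst p)) (fst p') * F (hmono (snd p)) (snd p') \<noteq> 0"
    unfolding tensor_map_def by (meson sum.not_neutral_contains_not_neutral)
  then have "p \<in> fsupp T" "p' \<in> fsupp (F (hmono (fst p))) \<times> fsupp (F (hmono (snd p)))"
    by (auto simp: fsupp_def mem_Times_iff)
  then show "p' \<in> (\<Union>p\<in>fsupp T. fsupp (F (hmono (fst p))) \<times> fsupp (F (hmono (snd p))))"
    by blast
qed

lemma tensor_map_left_inverse:
  fixes F G :: "'k::field hq \<Rightarrow> 'k hq"
  assumes G: "hq_linear G" and F_Hq: "\<And>b. F (hmono b) \<in> Hq"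
    and GF: "\<And>b. G (F (hmono b)) = hmono b" and T: "finite (fsupp T)"
  shows "tensor_map G (tensor_map F T) p = T p"
proof -
  define A where "A c x = F (hmono c) x" for c x
  define B where "B x y = G (hmono x) y" for x y
  define supp2 where "supp2 p'' = fsupp (F (hmono (fst p''))) \<times> fsupp (F (hmono (snd p'')))"
    for p'' :: "(int \<times> nat) \<times> (int \<times> nat)"
  define U where "U = (\<Union>p''\<in>fsupp T. supp2 p'')"
  have finite_U: "finite U"
    unfolding U_def supp2_def using T F_Hq Hq_finite_fsupp by blast
  have GF_coeff: "(\<Sum>y\<in>fsupp (F (hmono c)). A c y * B y x) = hmono c x" for c x
    using G GF[of c] F_Hq[of c] unfolding hq_linear_def A_def B_def by metis
  have "tensor_map G (tensor_map F T) p =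
      (\<Sum>p'\<in>U. tensor_map F T p' * B (fst p') (fst p) * B (snd p') (snd p))"
    unfolding tensor_map_def[of G] B_def
    by (rule sum.mono_neutral_left) (use finite_U fsupp_tensor_map in \<open>auto simp: U_def supp2_def fsupp_def\<close>)
  also have "\<dots> = (\<Sum>p'\<in>U. \<Sum>p''\<in>fsupp T. T p'' * ((A (fst p'') (fst p') * B (fst p') (fst p)) *
                 (A (snd p'') (snd p') * B (snd p') (snd p))))"
    unfolding tensor_map_def[of F] A_def sum_distrib_right by (intro sum.cong refl) (simp add: algebra_simps)
  also have "\<dots> = (\<Sum>p''\<in>fsupp T. \<Sum>p'\<in>U. T p'' * ((A (fst p'') (fst p') * B (fst p') (fst p)) *
                 (A (snd p'') (snd p') * B (snd p') (snd p))))"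
    by (rule sum.swap)
  also have "\<dots> = (\<Sum>p''\<in>fsupp T. T p'' * (hmono (fst p'') (fst p) * hmono (snd p'') (snd p)))"
  proof (rule sum.cong[OF refl])
    fix p'' assume p'': "p'' \<in> fsupp T"
    let ?h = "\<lambda>p'. (A (fst p'') (fst p') * B (fst p') (fst p)) * (A (snd p'') (snd p') * B (snd p') (snd p))"
    have "(\<Sum>p'\<in>U. ?h p') = (\<Sum>p'\<in>supp2 p''. ?h p')"
      by (rule sum.mono_neutral_right[OF finite_U])
        (use p'' in \<open>auto simp: U_def supp2_def A_def fsupp_def mem_Times_iff\<close>)
    also have "\<dots> = (\<Sum>x\<in>fsupp (F (hmono (fst p''))). A (fst p'') x * B x (fst p)) *
                    (\<Sum>y\<in>fsupp (F (hmono (snd p''))). A (snd p'') y * B y (snd p))"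
      unfolding supp2_def sum_product sum.cartesian_product by (simp add: case_prod_beta)
    finally show "(\<Sum>p'\<in>U. T p'' * ?h p') = T p'' * (hmono (fst p'') (fst p) * hmono (snd p'') (snd p))"
      by (simp add: GF_coeff sum_distrib_left[symmetric])
  qed
  also have "\<dots> = (\<Sum>p''\<in>fsupp T. if p'' = p then T p'' else 0)"
    by (intro sum.cong refl) (auto simp: hmono_def prod_eq_iff)
  also have "\<dots> = T p"
    using T by (simp add: fsupp_def)
  finally show ?thesis .
qed

lemma inv_into_Hq_linear:
  fixes \<phi> :: "'k::field hq \<Rightarrow> 'k hq"
  assumes bij: "bij_betw \<phi> Hq Hq"
    and add: "\<forall>f\<in>Hq. \<forall>g\<in>Hq. \<phi> (\<lambda>b. f b + g b) = (\<lambda>b. \<phi> f b + \<phi> g b)"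
    and smult: "\<forall>c. \<forall>f\<in>Hq. \<phi> (\<lambda>b. c * f b) = (\<lambda>b. c * \<phi> f b)"
  shows "hq_linear (inv_into Hq \<phi>)"
proof (rule hq_linearI; intro allI ballI)
  let ?\<psi> = "inv_into Hq \<phi>"
  note \<psi>_Hq = bij_betw_apply[OF bij_betw_inv_into[OF bij]]
  note \<phi>\<psi> = bij_betw_inv_into_right[OF bij] and \<psi>\<phi> = bij_betw_inv_into_left[OF bij]
  fix f g :: "'k hq" and c :: 'k assume f: "f \<in> Hq" and g: "g \<in> Hq"
  have "?\<psi> (\<lambda>b. f b + g b) = ?\<psi> (\<phi> (\<lambda>b. ?\<psi> f b + ?\<psi> g b))"
    using add \<psi>_Hq \<phi>\<psi> f g by simp
  then show "?\<psi> (\<lambda>b. f b + g b) = (\<lambda>b. ?\<psi> f b + ?\<psi> g b)"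
    using \<psi>\<phi>[OF Hq_add[OF \<psi>_Hq[OF f] \<psi>_Hq[OF g]]] by simp
  have "?\<psi> (\<lambda>b. c * f b) = ?\<psi> (\<phi> (\<lambda>b. c * ?\<psi> f b))"
    using smult \<psi>_Hq \<phi>\<psi> f by simp
  then show "?\<psi> (\<lambda>b. c * f b) = (\<lambda>b. c * ?\<psi> f b)"
    using \<psi>\<phi>[OF Hq_smult[OF \<psi>_Hq[OF f]]] by simp
qed

text \<open>Both sides are compared after applying \<phi> \<otimes> \<phi>, which is undone by
\<phi>\<inverse> \<otimes> \<phi>\<inverse> on finitely supported tensors.\<close>

lemma Aut0_inv_coalgebra_map:
  fixes \<phi> :: "'k::field hq \<Rightarrow> 'k hq"
  assumes "\<phi> \<in> Aut0 q"
  shows "hq_coalgebra_map q (inv_into Hq \<phi>)"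
proof
  let ?\<psi> = "inv_into Hq \<phi>"
  have bij: "bij_betw \<phi> Hq Hq"
    and coalgebra: "\<And>f. f \<in> Hq \<Longrightarrow> Delta q (\<phi> f) = tensor_map \<phi> (Delta q f)"
    and linear: "hq_linear ?\<psi>"
    using assms inv_into_Hq_linear unfolding Aut0_def by auto
  show \<psi>_Hq: "g \<in> Hq \<Longrightarrow> ?\<psi> g \<in> Hq" for g
    by (rule bij_betw_apply[OF bij_betw_inv_into[OF bij]])
  show "hq_linear ?\<psi>" by (fact linear)
  fix g :: "'k hq" assume g: "g \<in> Hq"
  show "Delta q (?\<psi> g) = tensor_map ?\<psi> (Delta q g)"
  proof
    fix p
    have "tensor_map ?\<psi> (Delta q g) p = tensor_map ?\<psi> (tensor_map \<phi> (Delta q (?\<psi> g))) p"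
      using bij_betw_inv_into_right[OF bij g] coalgebra[OF \<psi>_Hq[OF g]] by simp
    also have "\<dots> = Delta q (?\<psi> g) p"
      by (rule tensor_map_left_inverse[OF linear bij_betw_apply[OF bij hmono_in_Hq]
            bij_betw_inv_into_left[OF bij hmono_in_Hq]
            finite_fsupp_Delta[OF Hq_finite_fsupp[OF \<psi>_Hq[OF g]]]])
    finally show "Delta q (?\<psi> g) p = tensor_map ?\<psi> (Delta q g) p" by simp
  qed
qed

theorem lemma2p8:
  fixes q :: "'k::field" and \<phi> :: "'k hq \<Rightarrow> 'k hq" and m :: nat
  assumes "q \<noteq> 0"
    and "\<forall>n::nat. n > 0 \<longrightarrow> q ^ n \<noteq> 1"
    and "\<phi> \<in> Aut0 q"
    and "m \<ge> 1"
  shows "\<not> (\<phi> ` Hdeg m \<subseteq> Hbelow m)"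
proof
  assume "\<phi> ` Hdeg m \<subseteq> Hbelow m"
  moreover have "(hmono (0, m) :: 'k hq) \<in> Hdeg m"
    by (simp add: Hdeg_def hmono_in_Hq fsupp_hmono)
  ultimately have "\<phi> (hmono (0, m)) \<in> Hbelow m" by blast
  then have "inv_into Hq \<phi> (\<phi> (hmono (0, m))) \<in> Hbelow m"
    using hq_coalgebra_map.maps_Hbelow[OF Aut0_inv_coalgebra_map[OF assms(3)] assms(2,4)] by blast
  moreover have "inv_into Hq \<phi> (\<phi> (hmono (0, m))) = hmono (0, m)"
    using assms(3) unfolding Aut0_def by (blast intro: bij_betw_inv_into_left hmono_in_Hq)
  ultimately have "hmono (0, m) (0, m) = (0::'k)" by (simp add: Hbelow_coeff_zero)
  then show False by (simp add: hmono_def)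
qed

end
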